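(* Let $\langle X,\tau\rangle$ be a first-countable Hausdorff space containing $[0,1)$ as a dense and co-dense subset whose subspace topology is the Sorgenfrey topology on $[0,1)$. For $U\subseteq X$ write $\breve U=U\cap[0,1)$. For $z\in X\setminus[0,1)$ let $\mathsf L(z)$ be the set of $x\in[0,1]$ such that some sequence in $[0,1)$ converges to $z$ in $\langle X,\tau\rangle$ and to $x$ in the Euclidean topology of $[0,1]$; let $\mathsf m(z)=\min\mathsf L(z)$ (which exists since $\mathsf L(z)$ is nonempty and well-ordered by $<$) and $\mathsf M(z)=\sup\mathsf L(z)$. Let $z\in X\setminus[0,1)$ and $a<b$ reals. Then: (i) there is an open neighborhood $U$ of $z$ with $y<\mathsf M(z)$ for all $y\in\breve U$; (ii) for every open neighborhood $U$ of $z$ with $\breve U=[a,b)$ we have $\mathsf M(z)\le b$; (iii) for every $x\in[0,1)$ with $x<\mathsf m(z)$ there is an open neighborhood $U$ of $z$ with $x<y$ for all $y\in\breve U$; (iv) for every $x\in[0,1)$ and every open neighborhood $U$ of $z$, if $x<y$ for all $y\in\breve U$ then $x<\mathsf m(z)$; (v) every open neighborhood $U$ of $z$ contains some $x\in\breve U$ with $x<\mathsf m(z)$.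
   Context: The Sorgenfrey topology on $[0,1)$ is generated by the sets $[a,b)\cap[0,1)$. A subset is co-dense if its complement is dense. *)

theory Defs
  imports "HOL-Analysis.Analysis"
begin

definition sorgenfrey01 :: "real topology" where
  "sorgenfrey01 = topology_generated_by {{a..<b} \<inter> {0..<1} | a b. True}"

text \<open>The copy of [0,1) inside X is the image under the embedding e.
  breve U: the real coordinates of U \<inter> [0,1).\<close>
definition breve :: "(real \<Rightarrow> 'a) \<Rightarrow> 'a set \<Rightarrow> real set" where
  "breve e U = {y \<in> {0..<1}. e y \<in> U}"

definition Lset :: "'a topology \<Rightarrow> (real \<Rightarrow> 'a) \<Rightarrow> 'a \<Rightarrow> real set" where
  "Lset X e z = {x \<in> {0..1}. \<exists>s :: nat \<Rightarrow> real. (\<forall>n. s n \<in> {0..<1})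
      \<and> limitin X (\<lambda>n. e (s n)) z sequentially \<and> s \<longlonglongrightarrow> x}"

definition minL :: "'a topology \<Rightarrow> (real \<Rightarrow> 'a) \<Rightarrow> 'a \<Rightarrow> real" where
  "minL X e z = (LEAST x. x \<in> Lset X e z)"

definition MaxL :: "'a topology \<Rightarrow> (real \<Rightarrow> 'a) \<Rightarrow> 'a \<Rightarrow> real" where
  "MaxL X e z = Sup (Lset X e z)"

end

theory Submission
  imports Defs
begin

text \<open>A point of \<open>Lset X e z\<close> can only be approached from the left: a sequence
  converging to \<open>x\<close> from the right also converges to \<open>x\<close> in the Sorgenfrey
  topology, so its image converges to \<open>e x\<close>, and by Hausdorffness \<open>z = e x\<close>, which is
  impossible for \<open>z\<close> outside the copy of \<open>[0,1)\<close>. First countability lets us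
  build sequences through a decreasing neighbourhood base of \<open>z\<close>; with compactness of
  \<open>[0,1]\<close> this shows that \<open>Lset X e z\<close> is a nonempty closed subset of \<open>[0,1]\<close>,
  so its minimum exists; and if a bound fails in every neighbourhood of \<open>z\<close>, the
  witnesses have a subsequence converging to a point of \<open>Lset X e z\<close> that violates it.\<close>

lemma topspace_sorgenfrey01 [simp]: "topspace sorgenfrey01 = {0..<1}"
  unfolding sorgenfrey01_def topology_generated_by_topspace by blast

lemma openin_sorgenfrey01_right_interval:
  assumes "openin sorgenfrey01 U" "x \<in> U"
  shows "\<exists>\<epsilon>>0. \<forall>y. x \<le> y \<and> y < x + \<epsilon> \<and> y < 1 \<longrightarrow> y \<in> U"
proof -
  have "generate_topology_on {{a..<b} \<inter> {0..<1} | a b. True} U"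
    using assms(1) unfolding sorgenfrey01_def by (simp add: openin_topology_generated_by_iff)
  then show ?thesis using assms(2)
  proof (induction arbitrary: x)
    case Empty then show ?case by simp
  next
    case (Int V W)
    obtain \<epsilon>1 where "\<epsilon>1 > 0" "\<forall>y. x \<le> y \<and> y < x + \<epsilon>1 \<and> y < 1 \<longrightarrow> y \<in> V"
      using Int.IH(1) Int.prems by blast
    moreover obtain \<epsilon>2 where "\<epsilon>2 > 0" "\<forall>y. x \<le> y \<and> y < x + \<epsilon>2 \<and> y < 1 \<longrightarrow> y \<in> W"
      using Int.IH(2) Int.prems by blast
    ultimately show ?case by (intro exI[of _ "min \<epsilon>1 \<epsilon>2"]) auto
  next
    case (UN K)
    then obtain k where "k \<in> K" "x \<in> k" by auto
    with UN.IH show ?case by blast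
  next
    case (Basis s)
    then obtain a b where "s = {a..<b} \<inter> {0..<1}" by auto
    with Basis.prems show ?case by (intro exI[of _ "b - x"]) auto
  qed
qed

lemma limitin_sorgenfrey01_from_right:
  assumes "\<forall>n. s n \<in> {0..<1}" "eventually (\<lambda>n. x \<le> s n) sequentially" "s \<longlonglongrightarrow> x"
  shows "limitin sorgenfrey01 s x sequentially"
  unfolding limitin_def
proof (intro conjI allI impI)
  have "0 \<le> x"
    using assms(1,3) by (intro tendsto_lowerbound[of s x]) (auto intro: always_eventually)
  moreover obtain n where "x \<le> s n"
    using eventually_happens'[OF _ assms(2)] by auto
  ultimately show "x \<in> topspace sorgenfrey01"
    using assms(1) by (auto intro: le_less_trans)
  fix U assume "openin sorgenfrey01 U \<and> x \<in> U"
  then obtain \<epsilon> where "\<epsilon> > 0" and U: "\<forall>y. x \<le> y \<and> y < x + \<epsilon> \<and> y < 1 \<longrightarrow> y \<in> U"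
    using openin_sorgenfrey01_right_interval by blast
  have "eventually (\<lambda>n. dist (s n) x < \<epsilon>) sequentially"
    using assms(3) \<open>\<epsilon> > 0\<close> by (rule tendstoD)
  with assms(2) show "eventually (\<lambda>n. s n \<in> U) sequentially"
    by eventually_elim (use U assms(1) in \<open>auto simp: dist_real_def\<close>)
qed

lemma limit_from_right_in_image:
  assumes "Hausdorff_space X" "continuous_map sorgenfrey01 X e"
    and "\<forall>n. s n \<in> {0..<1}" "eventually (\<lambda>n. x \<le> s n) sequentially" "s \<longlonglongrightarrow> x"
    and "limitin X (\<lambda>n. e (s n)) z sequentially"
  shows "z \<in> e ` {0..<1}"
proof -
  have lim: "limitin sorgenfrey01 s x sequentially"
    using assms(3-5) by (rule limitin_sorgenfrey01_from_right)
  have "limitin X (\<lambda>n. e (s n)) (e x) sequentially"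
    using continuous_map_limit[OF assms(2) lim] by (simp add: o_def)
  then have "z = e x"
    using limitin_Hausdorff_unique[OF assms(6) _ _ assms(1)] by simp
  moreover have "x \<in> {0..<1}" using limitin_topspace[OF lim] by simp
  ultimately show ?thesis by blast
qed

lemma first_countable_decseq_neighbourhood_base:
  assumes "first_countable X" "z \<in> topspace X"
  obtains B where "\<And>n. openin X (B n)" "\<And>n. z \<in> B n" "decseq B"
    "\<And>U. openin X U \<Longrightarrow> z \<in> U \<Longrightarrow> \<exists>n. B n \<subseteq> U"
proof -
  obtain \<B> where "countable \<B>" and open_\<B>: "\<And>V. V \<in> \<B> \<Longrightarrow> openin X V"
    and base_\<B>: "\<And>U. openin X U \<Longrightarrow> z \<in> U \<Longrightarrow> \<exists>V\<in>\<B>. z \<in> V \<and> V \<subseteq> U"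
    using bspec[OF assms(1)[unfolded first_countable_def] assms(2)] by metis
  define \<B>' where "\<B>' = {V \<in> \<B>. z \<in> V}"
  have "countable \<B>'" using \<open>countable \<B>\<close> unfolding \<B>'_def by simp
  have "\<B>' \<noteq> {}" using base_\<B>[OF openin_topspace assms(2)] unfolding \<B>'_def by blast
  then have \<B>'_mem: "from_nat_into \<B>' k \<in> \<B>'" for k by (rule from_nat_into)
  define B where "B n = \<Inter> (from_nat_into \<B>' ` {..n})" for n
  show ?thesis
  proof
    show "openin X (B n)" for n
      unfolding B_def using \<B>'_mem open_\<B> unfolding \<B>'_def by (intro openin_Inter) auto
    show "z \<in> B n" for n
      unfolding B_def using \<B>'_mem unfolding \<B>'_def by blast
    show "decseq B"
      unfolding B_def decseq_def by (auto intro!: INF_superset_mono)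
    show "\<exists>n. B n \<subseteq> U" if U: "openin X U" "z \<in> U" for U
    proof -
      obtain V where "V \<in> \<B>'" "V \<subseteq> U" using base_\<B>[OF U] unfolding \<B>'_def by blast
      have "B (to_nat_on \<B>' V) \<subseteq> from_nat_into \<B>' (to_nat_on \<B>' V)"
        unfolding B_def by (rule INT_lower) simp
      also have "\<dots> = V" using \<open>countable \<B>'\<close> \<open>V \<in> \<B>'\<close> by simp
      finally show ?thesis using \<open>V \<subseteq> U\<close> by blast
    qed
  qed
qed

lemma first_countable_sequence_into_neighbourhoods:
  assumes "first_countable X" "z \<in> topspace X"
    and "\<And>n U. openin X U \<Longrightarrow> z \<in> U \<Longrightarrow> \<exists>y. g y \<in> U \<and> P n y"
  shows "\<exists>t. (\<forall>n. P n (t n)) \<and> limitin X (\<lambda>n. g (t n)) z sequentially"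
proof -
  obtain B where open_B: "\<And>n. openin X (B n)" and z_B: "\<And>n. z \<in> B n" and "decseq B"
    and base_B: "\<And>U. openin X U \<Longrightarrow> z \<in> U \<Longrightarrow> \<exists>n. B n \<subseteq> U"
    using first_countable_decseq_neighbourhood_base[OF assms(1,2)] by blast
  have "\<forall>n. \<exists>y. g y \<in> B n \<and> P n y" using assms(3)[OF open_B z_B] by blast
  then obtain t where t: "\<And>n. g (t n) \<in> B n \<and> P n (t n)"
    by (metis choice)
  have "limitin X (\<lambda>n. g (t n)) z sequentially"
    unfolding limitin_sequentially
  proof (intro conjI allI impI)
    fix U assume "openin X U \<and> z \<in> U"
    then obtain k where "B k \<subseteq> U" using base_B by blast
    have "g (t n) \<in> U" if "k \<le> n" for n
      using t[of n] \<open>decseq B\<close>[THEN decseqD, OF that] \<open>B k \<subseteq> U\<close> by blast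
    then show "\<exists>N. \<forall>n\<ge>N. g (t n) \<in> U" by blast
  qed (rule assms(2))
  with t show ?thesis by blast
qed

lemma Lset_subset: "Lset X e z \<subseteq> {0..1}"
  unfolding Lset_def by auto

lemma Lset_subsequence_limit:
  assumes "\<forall>n. s n \<in> {0..<1}" "limitin X (\<lambda>n. e (s n)) z sequentially"
  obtains r w where "strict_mono r" "(s \<circ> r) \<longlonglongrightarrow> w" "w \<in> Lset X e z"
proof -
  have "seq_compact {0..1::real}" by (simp add: compact_imp_seq_compact)
  moreover have "\<forall>n. s n \<in> {0..1}" using assms(1) by (simp add: less_imp_le)
  ultimately obtain r w where "w \<in> {0..1}" "strict_mono r" "(s \<circ> r) \<longlonglongrightarrow> w"
    unfolding seq_compact_def by blast
  moreover have "limitin X (\<lambda>n. e ((s \<circ> r) n)) z sequentially"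
    using limitin_subsequence[OF \<open>strict_mono r\<close> assms(2)] by (simp add: o_def)
  ultimately have "w \<in> Lset X e z"
    using assms(1) unfolding Lset_def by (auto intro!: exI[of _ "s \<circ> r"])
  with \<open>strict_mono r\<close> \<open>(s \<circ> r) \<longlonglongrightarrow> w\<close> show thesis by (rule that)
qed

lemma Lset_limit_from_neighbourhoods:
  assumes "first_countable X" "z \<in> topspace X"
    and "\<And>U. openin X U \<Longrightarrow> z \<in> U \<Longrightarrow> \<exists>y\<in>breve e U. P y"
  obtains s w where "\<And>n. s n \<in> {0..<1}" "\<And>n. P (s n)"
    "limitin X (\<lambda>n. e (s n)) z sequentially" "s \<longlonglongrightarrow> w" "w \<in> Lset X e z"
proof -
  have nbhd: "\<exists>y. e y \<in> U \<and> y \<in> {0..<1} \<and> P y" if "openin X U" "z \<in> U" for U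
    using assms(3)[OF that] unfolding breve_def by blast
  obtain t where t: "\<forall>n. t n \<in> {0..<1} \<and> P (t n)"
    and lim: "limitin X (\<lambda>n. e (t n)) z sequentially"
    using first_countable_sequence_into_neighbourhoods[OF assms(1,2) nbhd] by blast
  have "\<forall>n. t n \<in> {0..<1}" using t by blast
  then obtain r w where "strict_mono r" "(t \<circ> r) \<longlonglongrightarrow> w" "w \<in> Lset X e z"
    using Lset_subsequence_limit[OF _ lim] by blast
  moreover have "limitin X (\<lambda>n. e ((t \<circ> r) n)) z sequentially"
    using limitin_subsequence[OF \<open>strict_mono r\<close> lim] by (simp add: o_def)
  ultimately show thesis using t by (intro that[of "t \<circ> r" w]) auto
qed

lemma Lset_nonempty:
  assumes "first_countable X" "z \<in> X closure_of (e ` {0..<1})"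
  shows "Lset X e z \<noteq> {}"
proof -
  have zX: "z \<in> topspace X" and meets: "\<And>U. openin X U \<Longrightarrow> z \<in> U \<Longrightarrow> \<exists>x\<in>e ` {0..<1}. x \<in> U"
    using assms(2) unfolding in_closure_of by blast+
  have "\<exists>y\<in>breve e U. True" if "openin X U" "z \<in> U" for U
    using meets[OF that] unfolding breve_def by blast
  then obtain s w where "w \<in> Lset X e z"
    by (rule Lset_limit_from_neighbourhoods[OF assms(1) zX])
  then show ?thesis by blast
qed

lemma mem_Lset_iff:
  assumes "first_countable X" "z \<in> topspace X"
  shows "x \<in> Lset X e z \<longleftrightarrow> x \<in> {0..1} \<and>
    (\<forall>U. openin X U \<and> z \<in> U \<longrightarrow> (\<forall>\<epsilon>>0. \<exists>y\<in>breve e U. \<bar>y - x\<bar> < \<epsilon>))"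
    (is "_ \<longleftrightarrow> _ \<and> ?approx")
proof
  assume "x \<in> Lset X e z"
  then obtain s where s: "\<forall>n. s n \<in> {0..<1}" "limitin X (\<lambda>n. e (s n)) z sequentially"
    "s \<longlonglongrightarrow> x" and "x \<in> {0..1}"
    unfolding Lset_def by blast
  have ?approx
  proof (intro allI impI)
    fix U and \<epsilon> :: real assume "openin X U \<and> z \<in> U" "\<epsilon> > 0"
    then have "eventually (\<lambda>n. e (s n) \<in> U) sequentially"
      using s(2) unfolding limitin_def by blast
    moreover have "eventually (\<lambda>n. dist (s n) x < \<epsilon>) sequentially"
      using s(3) \<open>\<epsilon> > 0\<close> by (rule tendstoD)
    ultimately have "eventually (\<lambda>n. s n \<in> breve e U \<and> \<bar>s n - x\<bar> < \<epsilon>) sequentially"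
      by eventually_elim (use s(1) in \<open>auto simp: breve_def dist_real_def\<close>)
    then show "\<exists>y\<in>breve e U. \<bar>y - x\<bar> < \<epsilon>"
      using eventually_happens'[OF sequentially_bot] by blast
  qed
  with \<open>x \<in> {0..1}\<close> show "x \<in> {0..1} \<and> ?approx" ..
next
  assume rhs: "x \<in> {0..1} \<and> ?approx"
  have nbhd: "\<exists>y. e y \<in> U \<and> y \<in> {0..<1} \<and> \<bar>y - x\<bar> < 1 / real (Suc n)"
    if U: "openin X U" "z \<in> U" for n U
  proof -
    have "1 / real (Suc n) > 0" by simp
    then obtain y where "y \<in> breve e U" "\<bar>y - x\<bar> < 1 / real (Suc n)" using rhs U by blast
    then show ?thesis unfolding breve_def by blast
  qed
  obtain t where t: "\<forall>n. t n \<in> {0..<1} \<and> \<bar>t n - x\<bar> < 1 / real (Suc n)"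
    and lim: "limitin X (\<lambda>n. e (t n)) z sequentially"
    using first_countable_sequence_into_neighbourhoods[where g = e and
          P = "\<lambda>n y. y \<in> {0..<1} \<and> \<bar>y - x\<bar> < 1 / real (Suc n)", OF assms nbhd] by blast
  have "(\<lambda>n. t n - x) \<longlonglongrightarrow> 0" using t by (intro LIMSEQ_norm_0) simp
  then have "t \<longlonglongrightarrow> x" by (rule Lim_null[THEN iffD2])
  moreover have "\<forall>n. t n \<in> {0..<1}" using t by blast
  ultimately show "x \<in> Lset X e z" using lim rhs unfolding Lset_def by blast
qed

lemma closed_Lset:
  assumes "first_countable X" "z \<in> topspace X"
  shows "closed (Lset X e z)"
proof -
  have "x \<in> Lset X e z" if x: "x \<in> closure (Lset X e z)" for x
  proof -
    have "x \<in> {0..1}"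
      using closure_mono[OF Lset_subset[of X e z]] x by auto
    moreover have "\<exists>y\<in>breve e U. \<bar>y - x\<bar> < \<epsilon>" if U: "openin X U" "z \<in> U" "\<epsilon> > 0" for U \<epsilon>
    proof -
      obtain w where "w \<in> Lset X e z" "\<bar>w - x\<bar> < \<epsilon> / 2"
        using x \<open>\<epsilon> > 0\<close> unfolding closure_approachable dist_real_def by (meson half_gt_zero)
      moreover obtain y where "y \<in> breve e U" "\<bar>y - w\<bar> < \<epsilon> / 2"
        using mem_Lset_iff[OF assms] \<open>w \<in> Lset X e z\<close> U by (meson half_gt_zero)
      ultimately show ?thesis by (intro bexI[of _ y]) arith+
    qed
    ultimately show ?thesis using mem_Lset_iff[OF assms] by blast
  qed
  then show ?thesis using closure_subset_eq by blast
qed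

lemma minL_least:
  assumes "closed (Lset X e z)" "Lset X e z \<noteq> {}"
  shows "minL X e z \<in> Lset X e z" "\<And>x. x \<in> Lset X e z \<Longrightarrow> minL X e z \<le> x"
proof -
  have bdd: "bdd_below (Lset X e z)" using bdd_below_mono[OF bdd_below_Icc Lset_subset] .
  have Inf_mem: "Inf (Lset X e z) \<in> Lset X e z" using closed_contains_Inf[OF assms(2) bdd assms(1)] .
  have minL_eq: "minL X e z = Inf (Lset X e z)"
    unfolding minL_def using Inf_mem cInf_lower[OF _ bdd] by (intro Least_equality) auto
  show "minL X e z \<in> Lset X e z" using Inf_mem minL_eq by simp
  show "minL X e z \<le> x" if "x \<in> Lset X e z" for x
    using cInf_lower[OF that bdd] minL_eq by simp
qed

lemma Lset_le_if_breve_le: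
  assumes "openin X U" "z \<in> U" "\<forall>y\<in>breve e U. y \<le> c" "x \<in> Lset X e z"
  shows "x \<le> c"
proof -
  obtain s where s: "\<forall>n. s n \<in> {0..<1}" "limitin X (\<lambda>n. e (s n)) z sequentially" "s \<longlonglongrightarrow> x"
    using assms(4) unfolding Lset_def by blast
  have "eventually (\<lambda>n. e (s n) \<in> U) sequentially"
    using s(2) assms(1,2) unfolding limitin_def by blast
  then have "eventually (\<lambda>n. s n \<le> c) sequentially"
    by eventually_elim (use s(1) assms(3) in \<open>auto simp: breve_def\<close>)
  with s(3) show ?thesis by (intro tendsto_upperbound) auto
qed

lemma Lset_approached_from_left:
  assumes "Hausdorff_space X" "continuous_map sorgenfrey01 X e" "z \<notin> e ` {0..<1}"
    and "x \<in> Lset X e z" "openin X U" "z \<in> U"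
  shows "\<exists>y\<in>breve e U. y < x"
proof (rule ccontr)
  assume "\<not> ?thesis"
  then have above: "\<forall>y\<in>breve e U. x \<le> y" by (auto simp: not_less)
  obtain s where s: "\<forall>n. s n \<in> {0..<1}" "limitin X (\<lambda>n. e (s n)) z sequentially" "s \<longlonglongrightarrow> x"
    using assms(4) unfolding Lset_def by blast
  have "eventually (\<lambda>n. e (s n) \<in> U) sequentially"
    using s(2) assms(5,6) unfolding limitin_def by blast
  then have "eventually (\<lambda>n. x \<le> s n) sequentially"
    by eventually_elim (use s(1) above in \<open>auto simp: breve_def\<close>)
  then have "z \<in> e ` {0..<1}"
    using limit_from_right_in_image[OF assms(1,2) s(1) _ s(3,2)] by blast
  with assms(3) show False ..
qed

lemma neighbourhood_below_Lset_bound: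
  assumes "first_countable X" "Hausdorff_space X" "continuous_map sorgenfrey01 X e"
    and "z \<in> topspace X - e ` {0..<1}" "\<forall>w\<in>Lset X e z. w \<le> c"
  shows "\<exists>U. openin X U \<and> z \<in> U \<and> (\<forall>y\<in>breve e U. y < c)"
proof (rule ccontr)
  assume "\<not> ?thesis"
  then have "\<exists>y\<in>breve e U. c \<le> y" if "openin X U" "z \<in> U" for U
    using that by (auto simp: not_less)
  then obtain s w where s: "\<And>n. s n \<in> {0..<1}" "\<And>n. c \<le> s n"
    "limitin X (\<lambda>n. e (s n)) z sequentially" "s \<longlonglongrightarrow> w" "w \<in> Lset X e z"
    using Lset_limit_from_neighbourhoods[OF assms(1), of z e "\<lambda>y. c \<le> y"] assms(4) by blast
  have "\<forall>n. w \<le> s n" using assms(5) s(2,5) by (meson order_trans)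
  then have "z \<in> e ` {0..<1}"
    using limit_from_right_in_image[OF assms(2,3) _ _ s(4,3)] s(1) by (simp add: always_eventually)
  with assms(4) show False by blast
qed

lemma neighbourhood_above_Lset_bound:
  assumes "first_countable X" "z \<in> topspace X" "\<forall>w\<in>Lset X e z. c < w"
  shows "\<exists>U. openin X U \<and> z \<in> U \<and> (\<forall>y\<in>breve e U. c < y)"
proof (rule ccontr)
  assume "\<not> ?thesis"
  then have "\<exists>y\<in>breve e U. y \<le> c" if "openin X U" "z \<in> U" for U
    using that by (auto simp: not_less)
  then obtain s w where s: "\<And>n. s n \<in> {0..<1}" "\<And>n. s n \<le> c"
    "limitin X (\<lambda>n. e (s n)) z sequentially" "s \<longlonglongrightarrow> w" "w \<in> Lset X e z"
    using Lset_limit_from_neighbourhoods[OF assms(1,2), of e "\<lambda>y. y \<le> c"] by blast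
  have "w \<le> c" using s(2,4) by (intro tendsto_upperbound[of s]) (auto intro: always_eventually)
  with assms(3) s(5) show False by fastforce
qed

theorem mainTheorem14:
  fixes X :: "'a topology" and e :: "real \<Rightarrow> 'a" and z :: 'a and a b :: real
  assumes "first_countable X" and "Hausdorff_space X"
    and "e ` {0..<1} \<subseteq> topspace X"
    and "homeomorphic_map sorgenfrey01 (subtopology X (e ` {0..<1})) e"
    and "X closure_of (e ` {0..<1}) = topspace X"
    and "X closure_of (topspace X - e ` {0..<1}) = topspace X"
    and "z \<in> topspace X - e ` {0..<1}"
    and "a < b"
  shows "(\<exists>U. openin X U \<and> z \<in> U \<and> (\<forall>y \<in> breve e U. y < MaxL X e z))
    \<and> (\<forall>U. openin X U \<and> z \<in> U \<and> breve e U = {a..<b} \<longrightarrow> MaxL X e z \<le> b)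
    \<and> (\<forall>x \<in> {0..<1}. x < minL X e z \<longrightarrow>
          (\<exists>U. openin X U \<and> z \<in> U \<and> (\<forall>y \<in> breve e U. x < y)))
    \<and> (\<forall>x \<in> {0..<1}. \<forall>U. openin X U \<and> z \<in> U \<and> (\<forall>y \<in> breve e U. x < y)
          \<longrightarrow> x < minL X e z)
    \<and> (\<forall>U. openin X U \<and> z \<in> U \<longrightarrow> (\<exists>x \<in> breve e U. x < minL X e z))"
proof -
  have zX: "z \<in> topspace X" and zT: "z \<notin> e ` {0..<1}" using assms(7) by auto
  have cont: "continuous_map sorgenfrey01 X e"
    using homeomorphic_imp_continuous_map[OF assms(4)] by (simp add: continuous_map_in_subtopology)
  have ne: "Lset X e z \<noteq> {}" using Lset_nonempty[OF assms(1)] assms(5) zX by simp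
  note minL = minL_least[OF closed_Lset[OF assms(1) zX] ne]
  have bdd: "bdd_above (Lset X e z)" using bdd_above_mono[OF bdd_above_Icc Lset_subset] .
  have left: "\<exists>y\<in>breve e U. y < minL X e z" if "openin X U" "z \<in> U" for U
    using Lset_approached_from_left[OF assms(2) cont zT minL(1) that] .
  show ?thesis
  proof (intro conjI ballI allI impI)
    show "\<exists>U. openin X U \<and> z \<in> U \<and> (\<forall>y\<in>breve e U. y < MaxL X e z)"
      unfolding MaxL_def using neighbourhood_below_Lset_bound[OF assms(1,2) cont assms(7)]
        cSup_upper[OF _ bdd] by blast
    show "MaxL X e z \<le> b" if "openin X U \<and> z \<in> U \<and> breve e U = {a..<b}" for U
      unfolding MaxL_def using that ne Lset_le_if_breve_le[of X U z e b]
      by (intro cSup_least) auto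
    show "\<exists>U. openin X U \<and> z \<in> U \<and> (\<forall>y\<in>breve e U. x < y)" if "x < minL X e z" for x
      using neighbourhood_above_Lset_bound[OF assms(1) zX] minL(2) that by (meson less_le_trans)
    show "x < minL X e z" if "openin X U \<and> z \<in> U \<and> (\<forall>y\<in>breve e U. x < y)" for x U
      using left that by (meson less_trans)
    show "\<exists>x\<in>breve e U. x < minL X e z" if "openin X U \<and> z \<in> U" for U
      using left that by blast
  qed
qed

end
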